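(* Let $\Gamma$ be a marked graph (the core) with vertices $v_1,\dots,v_m$ and real marks $n_1,\dots,n_m$. For each $i$ let $C_{i1},\dots,C_{is_i}$ be finitely many chains $C_{ij}=[c^{ij}_1,\dots,c^{ij}_{k_{ij}}]$ ($k_{ij}\ge1$) of integers with $c^{ij}_1\ge1$ and $c^{ij}_l\ge2$ for $l\ge2$. Put $p_{ij}=|c^{ij}_1,\dots,c^{ij}_{k_{ij}}|$ and $q_{ij}=|c^{ij}_2,\dots,c^{ij}_{k_{ij}}|$ (so $p_{ij}/q_{ij}=c^{ij}_1-\cfrac{1}{c^{ij}_2-\cfrac{1}{\ddots}}$). Let $\widehat\Gamma$ be the hairy graph obtained by grafting: the mark of $v_i$ is replaced by $n_i+\sum_j c^{ij}_1$, and for each $(i,j)$ the chain $[c^{ij}_2,\dots,c^{ij}_{k_{ij}}]$ (if nonempty) is attached, with its vertex marked $c^{ij}_2$ joined to $v_i$ by a single edge. Then $$\det\widehat\Gamma=\det\Gamma\Big(n_i+\sum_j\frac{p_{ij}}{q_{ij}}\Big)\cdot\prod_{i,j}q_{ij},$$ where $\Gamma(n_i+\sum_j p_{ij}/q_{ij})$ denotes the core graph with the mark of $v_i$ replaced by $n_i+\sum_j p_{ij}/q_{ij}$. Alternatively, $$\det\widehat\Gamma=\det\widetilde\Gamma\cdot\prod_{i,j}(-p_{ij}),$$ where $\widetilde\Gamma$ is obtained from the core graph $\Gamma$ with its original marks $n_i$ by adding, for each pair $(i,j)$, one new vertex with mark $-q_{ij}/p_{ij}$ joined to $v_i$ by a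 single edge.
   Context: A marked graph is a finite graph without loops in which each vertex carries a real number (its mark); its determinant is the determinant of the matrix with the marks on the diagonal and minus the number of edges between $u$ and $v$ in the off-diagonal $(u,v)$ entry; the empty graph has determinant $1$. $|a_1,\dots,a_k|$ denotes the determinant of the chain with marks $a_1,\dots,a_k$ (tridiagonal matrix with diagonal $a_i$ and off-diagonal entries $-1$), and the empty chain has determinant $1$. *)

theory Defs
  imports "HOL-Combinatorics.Permutations" Complex_Main
begin

text \<open>A marked graph is given by a finite vertex set V, a real mark for each
vertex, and an edge-multiplicity function E (symmetric, no loops).\<close>

definition mg_matrix :: "('a \<Rightarrow> real) \<Rightarrow> ('a \<Rightarrow> 'a \<Rightarrow> nat) \<Rightarrow> 'a \<Rightarrow> 'a \<Rightarrow> real" where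
  "mg_matrix mark E u v = (if u = v then mark u else - real (E u v))"

definition mg_det :: "'a set \<Rightarrow> ('a \<Rightarrow> real) \<Rightarrow> ('a \<Rightarrow> 'a \<Rightarrow> nat) \<Rightarrow> real" where
  "mg_det V mark E =
     (\<Sum>p\<in>{p. p permutes V}. of_int (sign p) * (\<Prod>v\<in>V. mg_matrix mark E v (p v)))"

definition chain_det :: "real list \<Rightarrow> real" where
  "chain_det as = mg_det {..<length as} (\<lambda>i. as ! i)
       (\<lambda>i j. if Suc i = j \<or> Suc j = i then 1 else 0)"

text \<open>Chains attached at core vertex v: C v is the list of chains
C_{v,0},...,C_{v,s_v - 1}, each a nonempty integer list.\<close>

definition p_of :: "int list \<Rightarrow> real" where
  "p_of c = chain_det (map real_of_int c)"

definition q_of :: "int list \<Rightarrow> real" where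
  "q_of c = chain_det (map real_of_int (tl c))"

text \<open>Hairy graph: vertices Inl v (core) and Inr (v, j, l) for the l-th entry
(0-based, l \<ge> 1) of the j-th chain at v.\<close>

definition hairy_V :: "'v set \<Rightarrow> ('v \<Rightarrow> int list list) \<Rightarrow> ('v + 'v \<times> nat \<times> nat) set" where
  "hairy_V V C = Inl ` V \<union>
     {Inr (v, j, l) | v j l. v \<in> V \<and> j < length (C v) \<and> 1 \<le> l \<and> l < length (C v ! j)}"

fun hairy_mark :: "('v \<Rightarrow> real) \<Rightarrow> ('v \<Rightarrow> int list list) \<Rightarrow> ('v + 'v \<times> nat \<times> nat) \<Rightarrow> real" where
  "hairy_mark n C (Inl v) = n v + (\<Sum>j<length (C v). real_of_int (C v ! j ! 0))"
| "hairy_mark n C (Inr (v, j, l)) = real_of_int (C v ! j ! l)"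

fun hairy_E :: "('v \<Rightarrow> 'v \<Rightarrow> nat) \<Rightarrow> ('v + 'v \<times> nat \<times> nat) \<Rightarrow> ('v + 'v \<times> nat \<times> nat) \<Rightarrow> nat" where
  "hairy_E w (Inl u) (Inl v) = w u v"
| "hairy_E w (Inl u) (Inr (v, j, l)) = (if u = v \<and> l = 1 then 1 else 0)"
| "hairy_E w (Inr (v, j, l)) (Inl u) = (if u = v \<and> l = 1 then 1 else 0)"
| "hairy_E w (Inr (u, i, k)) (Inr (v, j, l)) =
     (if u = v \<and> i = j \<and> (Suc k = l \<or> Suc l = k) then 1 else 0)"

definition tilde_V :: "'v set \<Rightarrow> ('v \<Rightarrow> int list list) \<Rightarrow> ('v + 'v \<times> nat) set" where
  "tilde_V V C = Inl ` V \<union> {Inr (v, j) | v j. v \<in> V \<and> j < length (C v)}"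

fun tilde_mark :: "('v \<Rightarrow> real) \<Rightarrow> ('v \<Rightarrow> int list list) \<Rightarrow> ('v + 'v \<times> nat) \<Rightarrow> real" where
  "tilde_mark n C (Inl v) = n v"
| "tilde_mark n C (Inr (v, j)) = - q_of (C v ! j) / p_of (C v ! j)"

fun tilde_E :: "('v \<Rightarrow> 'v \<Rightarrow> nat) \<Rightarrow> ('v + 'v \<times> nat) \<Rightarrow> ('v + 'v \<times> nat) \<Rightarrow> nat" where
  "tilde_E w (Inl u) (Inl v) = w u v"
| "tilde_E w (Inl u) (Inr (v, j)) = (if u = v then 1 else 0)"
| "tilde_E w (Inr (v, j)) (Inl u) = (if u = v then 1 else 0)"
| "tilde_E w (Inr _) (Inr _) = 0"

end

theory Submission
  imports Defs
begin

text \<open>A chain hanging from a vertex \<open>y\<close> is peeled off from its free end. Expanding the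
  determinant along that end, a leaf, gives the three-term recurrence of chain determinants, so a
  chain with marks \<open>b\<close> contributes
  \<open>det \<Gamma> = |b| det (\<Gamma> - chain) - |tl b| det (\<Gamma> - chain - y)\<close>;
  by linearity in the mark of \<open>y\<close> this is \<open>|b|\<close> times the determinant of \<open>\<Gamma> - chain\<close> with the
  mark of \<open>y\<close> lowered by \<open>|tl b| / |b|\<close>. In \<open>\<Gamma>\<close>-hat the chain \<open>[c\<^sub>2, \<dots>, c\<^sub>k]\<close> thus contributes
  the factor \<open>q\<close> and turns the mark \<open>c\<^sub>1\<close> into \<open>c\<^sub>1 - |c\<^sub>3, \<dots>, c\<^sub>k| / q = p / q\<close>; in \<open>\<Gamma>\<close>-tilde the
  single vertex of mark \<open>-q/p\<close> contributes \<open>-q/p\<close> and adds \<open>p/q\<close> to the mark. Removing all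
  chains one at a time leaves the same core determinant in both cases.\<close>

definition det_on :: "'a set \<Rightarrow> ('a \<Rightarrow> 'a \<Rightarrow> 'b::comm_ring_1) \<Rightarrow> 'b" where
  "det_on V A = (\<Sum>p | p permutes V. of_int (sign p) * (\<Prod>v\<in>V. A v (p v)))"

lemma det_on_cong:
  assumes "\<And>u v. u \<in> V \<Longrightarrow> v \<in> V \<Longrightarrow> A u v = B u v"
  shows "det_on V A = det_on V B"
  unfolding det_on_def
proof (intro sum.cong arg_cong[where f = "\<lambda>x. _ * x"] prod.cong refl)
  fix p v assume "p \<in> {p. p permutes V}" "v \<in> V"
  then show "A v (p v) = B v (p v)"
    by (simp add: assms permutes_in_image)
qed

lemma permutes_fixing_iff: "p permutes V \<and> p y = y \<longleftrightarrow> p permutes (V - {y})"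
proof
  assume "p permutes V \<and> p y = y"
  then show "p permutes (V - {y})"
    by (auto intro: permutes_superset)
next
  assume p: "p permutes (V - {y})"
  then show "p permutes V \<and> p y = y"
    using permutes_subset[OF p] permutes_not_in[OF p] by blast
qed

lemma det_on_split_fixed:
  assumes "finite V" "y \<in> V"
  shows "det_on V A = A y y * det_on (V - {y}) A +
    (\<Sum>p | p permutes V \<and> p y \<noteq> y. of_int (sign p) * (\<Prod>v\<in>V. A v (p v)))"
proof -
  let ?t = "\<lambda>p. of_int (sign p) * (\<Prod>v\<in>V. A v (p v))"
  have fixing: "?t p = A y y * (of_int (sign p) * (\<Prod>v\<in>V - {y}. A v (p v)))"
    if "p permutes V - {y}" for p
    using that permutes_fixing_iff[of p V y] prod.remove[OF assms, of "\<lambda>v. A v (p v)"] by simp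
  have "det_on V A = sum ?t ({p. p permutes V} \<inter> {p. p y = y}) + sum ?t ({p. p permutes V} - {p. p y = y})"
    unfolding det_on_def by (rule sum.Int_Diff) (simp add: finite_permutations assms)
  also have "{p. p permutes V} \<inter> {p. p y = y} = {p. p permutes V - {y}}"
    by (simp only: Int_def mem_Collect_eq permutes_fixing_iff)
  also have "{p. p permutes V} - {p. p y = y} = {p. p permutes V \<and> p y \<noteq> y}"
    by blast
  finally show ?thesis
    by (simp add: fixing det_on_def sum_distrib_left)
qed

lemma det_on_update_diagonal:
  assumes fin: "finite V" and y: "y \<in> V"
    and agree: "\<And>u v. u \<in> V \<Longrightarrow> v \<in> V \<Longrightarrow> (u, v) \<noteq> (y, y) \<Longrightarrow> B u v = A u v"
  shows "det_on V B = det_on V A + (B y y - A y y) * det_on (V - {y}) A"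
proof -
  have "(\<Prod>v\<in>V. B v (p v)) = (\<Prod>v\<in>V. A v (p v))" if "p permutes V" "p y \<noteq> y" for p
    using that by (intro prod.cong refl agree) (auto simp: permutes_in_image)
  moreover have "det_on (V - {y}) B = det_on (V - {y}) A"
    by (rule det_on_cong) (auto intro: agree)
  ultimately show ?thesis
    using det_on_split_fixed[OF fin y, of B] det_on_split_fixed[OF fin y, of A]
    by (simp add: algebra_simps)
qed

lemma prod_remove_two:
  assumes "finite V" "x \<in> V" "y \<in> V" "x \<noteq> y"
  shows "(\<Prod>v\<in>V. g v) = g x * g y * (\<Prod>v\<in>V - {x, y}. g v)"
proof -
  have "(\<Prod>v\<in>V. g v) = g x * (\<Prod>v\<in>V - {x}. g v)"
    using assms by (intro prod.remove)
  also have "(\<Prod>v\<in>V - {x}. g v) = g y * (\<Prod>v\<in>V - {x} - {y}. g v)"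
    using assms by (intro prod.remove) auto
  also have "V - {x} - {y} = V - {x, y}"
    by blast
  finally show ?thesis
    by (simp only: mult.assoc)
qed

lemma permutes_swapping_eq:
  assumes "x \<in> V" "y \<in> V"
  shows "{p. p permutes V \<and> p x = y \<and> p y = x} =
    (\<lambda>q. Transposition.transpose x y \<circ> q) ` {q. q permutes V - {x, y}}"
proof (intro equalityI subsetI)
  let ?T = "Transposition.transpose x y"
  fix p assume "p \<in> {p. p permutes V \<and> p x = y \<and> p y = x}"
  then have "?T \<circ> p permutes V - {x, y}"
    using assms permutes_fixing_iff[of "?T \<circ> p" V x] permutes_fixing_iff[of "?T \<circ> p" "V - {x}" y]
    by (simp add: permutes_compose permutes_swap_id Diff_insert2[of V x "{y}"])
  moreover have "p = ?T \<circ> (?T \<circ> p)"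
    by (simp add: fun_eq_iff)
  ultimately show "p \<in> (\<lambda>q. ?T \<circ> q) ` {q. q permutes V - {x, y}}"
    by blast
next
  let ?T = "Transposition.transpose x y"
  fix p assume "p \<in> (\<lambda>q. ?T \<circ> q) ` {q. q permutes V - {x, y}}"
  then obtain q where q: "q permutes V - {x, y}" "p = ?T \<circ> q"
    by blast
  then have "q permutes V" "q x = x" "q y = y"
    using permutes_subset[OF q(1)] permutes_not_in[OF q(1)] by auto
  then show "p \<in> {p. p permutes V \<and> p x = y \<and> p y = x}"
    using q(2) assms by (auto intro: permutes_compose permutes_swap_id)
qed

lemma leaf_permutation_term_zero:
  fixes A :: "'a \<Rightarrow> 'a \<Rightarrow> 'b::comm_semiring_1"
  assumes fin: "finite V" and x: "x \<in> V" and xy: "x \<noteq> y"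
    and leaf: "\<And>z. z \<in> V - {x, y} \<Longrightarrow> A x z = 0 \<and> A z x = 0"
    and p: "p permutes V" "p x \<noteq> x" "\<not> (p x = y \<and> p y = x)"
  shows "(\<Prod>v\<in>V. A v (p v)) = 0"
proof -
  have "\<exists>z\<in>V. A z (p z) = 0"
  proof (cases "p x = y")
    case False
    then show ?thesis
      using leaf p x permutes_in_image by fastforce
  next
    case True
    define z where "z = inv p x"
    have "p z = x" "z \<in> V"
      unfolding z_def using p(1) x by (auto simp: permutes_inverses permutes_in_image permutes_inv)
    moreover have "z \<notin> {x, y}"
      using \<open>p z = x\<close> True p(3) xy by auto
    ultimately show ?thesis
      using leaf by auto
  qed
  then show ?thesis
    using fin by (intro prod_zero) auto
qed

lemma det_on_leaf:
  assumes fin: "finite V" and x: "x \<in> V" and y: "y \<in> V" and xy: "x \<noteq> y"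
    and leaf: "\<And>z. z \<in> V - {x, y} \<Longrightarrow> A x z = 0 \<and> A z x = 0"
  shows "det_on V A = A x x * det_on (V - {x}) A - A x y * A y x * det_on (V - {x, y}) A"
proof -
  let ?t = "\<lambda>p. of_int (sign p) * (\<Prod>v\<in>V. A v (p v))"
  let ?T = "Transposition.transpose x y"
  have swap_term: "?t (?T \<circ> q) = - (A x y * A y x) * (of_int (sign q) * (\<Prod>v\<in>V - {x, y}. A v (q v)))"
    if q: "q permutes V - {x, y}" for q
  proof -
    have "sign (?T \<circ> q) = - sign q"
      using fin xy
      by (simp add: sign_compose[OF permutation_swap_id permutes_imp_permutation[OF _ q]] sign_swap_id)
    moreover have "(\<Prod>v\<in>V - {x, y}. A v ((?T \<circ> q) v)) = (\<Prod>v\<in>V - {x, y}. A v (q v))"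
      using permutes_in_image[OF q] by (intro prod.cong) (auto simp: transpose_def)
    moreover have "q x = x" "q y = y"
      using permutes_not_in[OF q] by auto
    ultimately show ?thesis
      by (simp add: prod_remove_two[OF fin x y xy, of "\<lambda>v. A v (?T (q v))"])
  qed
  have "(\<Sum>p | p permutes V \<and> p x \<noteq> x. ?t p) = (\<Sum>p | p permutes V \<and> p x = y \<and> p y = x. ?t p)"
    using leaf_permutation_term_zero[where A = A, OF fin x xy leaf] xy fin
    by (intro sum.mono_neutral_right) (auto simp: finite_permutations)
  also have "\<dots> = (\<Sum>q | q permutes V - {x, y}. ?t (?T \<circ> q))"
    unfolding permutes_swapping_eq[OF x y]
    by (rule sum.reindex_cong[OF _ refl refl], rule inj_onI)
       (metis comp_assoc transpose_comp_involutory id_comp)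
  also have "\<dots> = (\<Sum>q | q permutes V - {x, y}.
      - (A x y * A y x) * (of_int (sign q) * (\<Prod>v\<in>V - {x, y}. A v (q v))))"
    by (intro sum.cong refl swap_term) simp
  also have "\<dots> = - (A x y * A y x) * det_on (V - {x, y}) A"
    by (simp only: det_on_def sum_distrib_left)
  finally show ?thesis
    using det_on_split_fixed[OF fin x, of A] by simp
qed

lemma det_on_image:
  assumes fin: "finite V" and inj: "inj_on f V"
  shows "det_on (f ` V) A = det_on V (\<lambda>u v. A (f u) (f v))"
proof -
  have bij: "bij_betw f V (f ` V)"
    using inj by (rule inj_on_imp_bij_betw)
  have bij_inv: "bij_betw (inv_into V f) (f ` V) V"
    using bij by (rule bij_betw_inv_into)
  show ?thesis
    unfolding det_on_def
  proof (rule sym, rule sum.reindex_bij_witness[where j = "map_permutation V f" and i = "map_permutation (f ` V) (inv_into V f)"])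
    fix p assume "p \<in> {p. p permutes f ` V}"
    then show "map_permutation V f (map_permutation (f ` V) (inv_into V f) p) = p"
      by (auto intro: map_permutation_compose_inv[OF bij_inv] f_inv_into_f)
    show "map_permutation (f ` V) (inv_into V f) p \<in> {p. p permutes V}"
      using \<open>p \<in> _\<close> map_permutation_permutes[OF bij_inv] by auto
  next
    fix q assume q: "q \<in> {q. q permutes V}"
    then show "map_permutation (f ` V) (inv_into V f) (map_permutation V f q) = q"
      by (auto intro: map_permutation_compose_inv[OF bij] inv_into_f_f[OF inj])
    show "map_permutation V f q \<in> {p. p permutes f ` V}"
      using q map_permutation_permutes[OF bij] by auto
    have "(\<Prod>v\<in>f ` V. A v (map_permutation V f q v)) = (\<Prod>v\<in>V. A (f v) (map_permutation V f q (f v)))"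
      using inj by (rule prod.reindex_cong) simp_all
    also have "\<dots> = (\<Prod>v\<in>V. A (f v) (f (q v)))"
      using inj by (intro prod.cong refl) (simp add: map_permutation_apply)
    finally show "of_int (sign (map_permutation V f q)) * (\<Prod>v\<in>f ` V. A v (map_permutation V f q v)) =
        of_int (sign q) * (\<Prod>v\<in>V. A (f v) (f (q v)))"
      using q inj fin by (simp add: sign_map_permutation)
  qed
qed

lemma mg_det_eq_det_on: "mg_det V mark E = det_on V (mg_matrix mark E)"
  unfolding mg_det_def det_on_def ..

lemma mg_det_empty [simp]: "mg_det {} mark E = 1"
  by (simp add: mg_det_eq_det_on det_on_def)

lemma mg_det_singleton [simp]: "mg_det {x} mark E = mark x"
  by (simp add: mg_det_eq_det_on det_on_def mg_matrix_def)

lemma mg_det_cong: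
  assumes "\<And>v. v \<in> V \<Longrightarrow> mark v = mark' v"
  shows "mg_det V mark E = mg_det V mark' E"
  unfolding mg_det_eq_det_on by (rule det_on_cong) (simp add: mg_matrix_def assms)

lemma mg_det_image:
  assumes "finite V" "inj_on f V"
  shows "mg_det (f ` V) mark E = mg_det V (mark \<circ> f) (\<lambda>u v. E (f u) (f v))"
  unfolding mg_det_eq_det_on det_on_image[OF assms]
  by (rule det_on_cong) (use assms(2) in \<open>auto simp: mg_matrix_def inj_on_eq_iff\<close>)

lemma mg_det_update_mark:
  assumes "finite V" "y \<in> V"
  shows "mg_det V (mark(y := a)) E = mg_det V mark E + (a - mark y) * mg_det (V - {y}) mark E"
proof -
  have "det_on V (mg_matrix (mark(y := a)) E) = det_on V (mg_matrix mark E) +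
      (mg_matrix (mark(y := a)) E y y - mg_matrix mark E y y) * det_on (V - {y}) (mg_matrix mark E)"
    by (rule det_on_update_diagonal[OF assms]) (auto simp: mg_matrix_def)
  then show ?thesis
    by (simp add: mg_det_eq_det_on mg_matrix_def)
qed

lemma mg_det_leaf:
  assumes "finite V" "x \<in> V" "y \<in> V" "x \<noteq> y"
    and "\<And>z. z \<in> V - {x, y} \<Longrightarrow> E x z = 0 \<and> E z x = 0"
  shows "mg_det V mark E =
    mark x * mg_det (V - {x}) mark E - real (E x y * E y x) * mg_det (V - {x, y}) mark E"
  unfolding mg_det_eq_det_on
  by (subst det_on_leaf[OF assms(1-4)]) (use assms(4,5) in \<open>auto simp: mg_matrix_def\<close>)

text \<open>The determinant of the chain with its first vertex deleted. The value \<open>0\<close> for the empty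
  chain makes the three-term recurrences below hold without exceptions.\<close>

definition chain_minor :: "real list \<Rightarrow> real" where
  "chain_minor b = (if b = [] then 0 else chain_det (tl b))"

lemma chain_det_Nil [simp]: "chain_det [] = 1"
  by (simp add: chain_det_def)

lemma chain_det_singleton [simp]: "chain_det [a] = a"
  by (simp add: chain_det_def lessThan_Suc)

lemma chain_minor_Nil [simp]: "chain_minor [] = 0"
  by (simp add: chain_minor_def)

lemma chain_minor_Cons [simp]: "chain_minor (a # b) = chain_det b"
  by (simp add: chain_minor_def)

lemma chain_det_take:
  assumes "m \<le> length b"
  shows "chain_det (take m b) = mg_det {..<m} ((!) b) (\<lambda>i j. if Suc i = j \<or> Suc j = i then 1 else 0)"
proof -
  have "length (take m b) = m"
    using assms by simp
  then show ?thesis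
    unfolding chain_det_def by (auto intro: mg_det_cong)
qed

lemma chain_det_append_two: "chain_det (xs @ [a, c]) = c * chain_det (xs @ [a]) - chain_det xs"
proof -
  let ?E = "\<lambda>i j. if Suc i = j \<or> Suc j = i then 1 else 0 :: nat"
  let ?k = "length xs"
  have last: "(xs @ [a, c]) ! Suc ?k = c"
    by (simp add: nth_append)
  have "chain_det (xs @ [a, c]) = mg_det {..<Suc (Suc ?k)} ((!) (xs @ [a, c])) ?E"
    by (simp add: chain_det_def)
  also have "\<dots> = (xs @ [a, c]) ! Suc ?k * mg_det ({..<Suc (Suc ?k)} - {Suc ?k}) ((!) (xs @ [a, c])) ?E
      - real (?E (Suc ?k) ?k * ?E ?k (Suc ?k)) * mg_det ({..<Suc (Suc ?k)} - {Suc ?k, ?k}) ((!) (xs @ [a, c])) ?E"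
    by (rule mg_det_leaf) auto
  also have "{..<Suc (Suc ?k)} - {Suc ?k} = {..<Suc ?k}"
    by auto
  also have "{..<Suc (Suc ?k)} - {Suc ?k, ?k} = {..<?k}"
    by auto
  finally show ?thesis
    using chain_det_take[of "Suc ?k" "xs @ [a, c]"] chain_det_take[of ?k "xs @ [a, c]"] last
    by simp
qed

lemma chain_minor_append_two: "chain_minor (xs @ [a, c]) = c * chain_minor (xs @ [a]) - chain_minor xs"
  by (cases xs) (simp_all add: chain_det_append_two)

definition path_marks :: "('a \<Rightarrow> real) \<Rightarrow> (nat \<Rightarrow> 'a) \<Rightarrow> nat \<Rightarrow> real list" where
  "path_marks mark p k = map (mark \<circ> p) [1..<Suc k]"

definition hanging_path :: "'a set \<Rightarrow> ('a \<Rightarrow> 'a \<Rightarrow> nat) \<Rightarrow> (nat \<Rightarrow> 'a) \<Rightarrow> nat \<Rightarrow> bool" where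
  "hanging_path W E p k \<longleftrightarrow>
     (\<forall>l\<in>{1..k}. \<forall>z\<in>W - {p l}.
        E (p l) z = of_bool (z = p (l - 1) \<or> (l < k \<and> z = p (Suc l))) \<and> E z (p l) = E (p l) z)"

lemma path_marks_0 [simp]: "path_marks mark p 0 = []"
  by (simp add: path_marks_def)

lemma path_marks_Suc [simp]: "path_marks mark p (Suc m) = path_marks mark p m @ [mark (p (Suc m))]"
  by (simp add: path_marks_def)

lemma hanging_pathD:
  assumes "hanging_path W E p k" "l \<in> {1..k}" "z \<in> W - {p l}"
  shows "E (p l) z = of_bool (z = p (l - 1) \<or> (l < k \<and> z = p (Suc l)))" "E z (p l) = E (p l) z"
  using assms unfolding hanging_path_def by blast+

lemma hanging_path_subset: "hanging_path W E p k \<Longrightarrow> W' \<subseteq> W \<Longrightarrow> hanging_path W' E p k"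
  unfolding hanging_path_def by blast

lemma path_vertex_notin:
  fixes p :: "nat \<Rightarrow> 'a"
  assumes inj: "inj_on p {1..k}" and disj: "p ` {1..k} \<inter> U = {}" and "m < l" "l \<le> k"
  shows "p l \<notin> U \<union> p ` {1..m}"
proof
  assume "p l \<in> U \<union> p ` {1..m}"
  moreover have l: "l \<in> {1..k}"
    using assms(3,4) by simp
  ultimately obtain i where "i \<in> {1..m}" "p l = p i"
    using disj by blast
  then show False
    using inj_onD[OF inj, of l i] l assms by simp
qed

lemma mg_det_hanging_path_remove_last:
  assumes fin: "finite U" and root: "p 0 \<in> U" and inj: "inj_on p {1..k}"
    and disj: "p ` {1..k} \<inter> U = {}" and path: "hanging_path (U \<union> p ` {1..k}) E p k"
    and m: "1 \<le> m" "m \<le> k"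
  shows "mg_det (U \<union> p ` {1..m}) mark E = mark (p m) * mg_det (U \<union> p ` {1..m - 1}) mark E
    - mg_det (U \<union> p ` {1..m - 1} - {p (m - 1)}) mark E"
proof -
  let ?W = "\<lambda>m. U \<union> p ` {1..m}"
  have W_m: "?W m = insert (p m) (?W (m - 1))"
    using m by (cases m) (auto simp: atLeastAtMostSuc_conv)
  have prev: "p (m - 1) \<in> ?W (m - 1)"
    using root m by (cases "m = 1") auto
  have new: "p m \<notin> ?W (m - 1)"
    using path_vertex_notin[OF inj disj, of "m - 1" m] m by simp
  have adjacent: "E (p m) z = of_bool (z = p (m - 1)) \<and> E z (p m) = E (p m) z"
    if z: "z \<in> ?W m - {p m}" for z
  proof -
    have "z \<in> ?W k - {p m}"
      using z m by auto
    moreover have "z \<noteq> p (Suc m)" if "m < k"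
      using z path_vertex_notin[OF inj disj, of m "Suc m"] that by auto
    ultimately show ?thesis
      using hanging_pathD[OF path, of m z] m by auto
  qed
  have x: "p m \<in> ?W m" and y: "p (m - 1) \<in> ?W m" and xy: "p m \<noteq> p (m - 1)"
    using prev new unfolding W_m by auto
  have "mg_det (?W m) mark E = mark (p m) * mg_det (?W m - {p m}) mark E
      - real (E (p m) (p (m - 1)) * E (p (m - 1)) (p m)) * mg_det (?W m - {p m, p (m - 1)}) mark E"
    by (rule mg_det_leaf[OF _ x y xy]) (use fin adjacent in auto)
  moreover have "?W m - {p m} = ?W (m - 1)" "?W m - {p m, p (m - 1)} = ?W (m - 1) - {p (m - 1)}"
    using new unfolding W_m by auto
  ultimately show ?thesis
    using adjacent[of "p (m - 1)"] y xy prev by simp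
qed

text \<open>Deleting the chain from its free end reproduces the three-term recurrence of chain determinants.\<close>

lemma mg_det_hanging_path:
  assumes fin: "finite U" and root: "p 0 \<in> U" and inj: "inj_on p {1..k}"
    and disj: "p ` {1..k} \<inter> U = {}" and path: "hanging_path (U \<union> p ` {1..k}) E p k"
  shows "mg_det (U \<union> p ` {1..k}) mark E =
    chain_det (path_marks mark p k) * mg_det U mark E
    - chain_minor (path_marks mark p k) * mg_det (U - {p 0}) mark E"
proof -
  let ?W = "\<lambda>m. U \<union> p ` {1..m}"
  note remove_last = mg_det_hanging_path_remove_last[OF assms]
  have "mg_det (?W m) mark E =
      chain_det (path_marks mark p m) * mg_det U mark E
      - chain_minor (path_marks mark p m) * mg_det (U - {p 0}) mark E" if "m \<le> k" for m
    using that
  proof (induction m rule: induct_nat_012)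
    case 0
    then show ?case
      by simp
  next
    case 1
    then show ?case
      using remove_last[of 1] by simp
  next
    case (ge2 j)
    have "p (Suc j) \<notin> ?W j"
      using path_vertex_notin[OF inj disj, of j "Suc j"] ge2.prems by simp
    then have "?W (Suc j) - {p (Suc j)} = ?W j"
      by (auto simp: atLeastAtMostSuc_conv)
    then have "mg_det (?W (Suc (Suc j))) mark E =
        mark (p (Suc (Suc j))) * mg_det (?W (Suc j)) mark E - mg_det (?W j) mark E"
      using remove_last[of "Suc (Suc j)"] ge2.prems by simp
    also have "\<dots> = (mark (p (Suc (Suc j))) * chain_det (path_marks mark p (Suc j))
          - chain_det (path_marks mark p j)) * mg_det U mark E
        - (mark (p (Suc (Suc j))) * chain_minor (path_marks mark p (Suc j))
          - chain_minor (path_marks mark p j)) * mg_det (U - {p 0}) mark E"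
      unfolding ge2.IH(1)[OF Suc_leD[OF Suc_leD[OF ge2.prems]]] ge2.IH(2)[OF Suc_leD[OF ge2.prems]]
      by (simp add: algebra_simps)
    finally show ?case
      by (simp add: chain_det_append_two chain_minor_append_two)
  qed
  then show ?thesis
    by simp
qed

lemma mg_det_absorb_hanging_path:
  assumes fin: "finite U" and root: "p 0 \<in> U" and "inj_on p {1..k}"
    and "p ` {1..k} \<inter> U = {}" and "hanging_path (U \<union> p ` {1..k}) E p k"
    and nonzero: "chain_det (path_marks mark p k) \<noteq> 0"
  shows "mg_det (U \<union> p ` {1..k}) mark E = chain_det (path_marks mark p k) *
    mg_det U (mark(p 0 := mark (p 0) - chain_minor (path_marks mark p k) / chain_det (path_marks mark p k))) E"
proof -
  let ?K = "chain_det (path_marks mark p k)" and ?M = "chain_minor (path_marks mark p k)"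
  have "mg_det (U \<union> p ` {1..k}) mark E = ?K * mg_det U mark E - ?M * mg_det (U - {p 0}) mark E"
    by (rule mg_det_hanging_path[OF assms(1-5)])
  also have "\<dots> = ?K * (mg_det U mark E + (mark (p 0) - ?M / ?K - mark (p 0)) * mg_det (U - {p 0}) mark E)"
    using nonzero by (simp add: field_simps)
  also have "\<dots> = ?K * mg_det U (mark(p 0 := mark (p 0) - ?M / ?K)) E"
    by (simp only: mg_det_update_mark[OF fin root])
  finally show ?thesis .
qed

lemma path_marks_fun_upd: "y \<notin> p ` {1..k} \<Longrightarrow> path_marks (mark(y := a)) p k = path_marks mark p k"
  unfolding path_marks_def by (intro map_cong refl) (auto simp del: upt_Suc)

lemma map_nth_upt_1: "map ((!) xs) [1..<length xs] = tl xs"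
  by (cases xs) (simp_all del: upt_Suc add: map_Suc_upt[symmetric] comp_def map_nth)

lemma chain_det_Cons: "chain_det (a # b) = a * chain_det b - chain_minor b"
proof -
  let ?E = "\<lambda>i j. if Suc i = j \<or> Suc j = i then 1 else 0 :: nat"
  let ?k = "length b"
  have vertices: "{0} \<union> id ` {1..?k} = {..<Suc ?k}"
    by auto
  have marks: "path_marks ((!) (a # b)) id ?k = b"
    using map_nth_upt_1[of "a # b"] by (simp del: upt_Suc add: path_marks_def)
  have "hanging_path ({0} \<union> id ` {1..?k}) ?E id ?k"
    unfolding hanging_path_def by auto
  then have "mg_det ({0} \<union> id ` {1..?k}) ((!) (a # b)) ?E =
      chain_det b * mg_det {0} ((!) (a # b)) ?E - chain_minor b * mg_det ({0} - {id 0}) ((!) (a # b)) ?E"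
    by (subst mg_det_hanging_path) (auto simp: marks)
  then show ?thesis
    unfolding vertices by (simp add: chain_det_def)
qed

lemma chain_det_ge_chain_minor:
  assumes "\<forall>x\<in>set b. 2 \<le> x"
  shows "0 \<le> chain_minor b \<and> chain_minor b + 1 \<le> chain_det b"
  using assms
proof (induction b)
  case Nil
  then show ?case
    by simp
next
  case (Cons a b)
  then have "chain_minor b + 1 \<le> chain_det b" "0 \<le> chain_det b" "2 * chain_det b \<le> a * chain_det b"
    by (auto intro: mult_right_mono)
  then show ?case
    by (simp add: chain_det_Cons)
qed

lemma sum_filter_insert:
  assumes "finite I" "i0 \<notin> I"
  shows "(\<Sum>i | i \<in> insert i0 I \<and> r i = u. f i) = (if r i0 = u then f i0 else 0) + (\<Sum>i | i \<in> I \<and> r i = u. f i)"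
proof -
  have "{i. i \<in> insert i0 I \<and> r i = u} = (if r i0 = u then insert i0 {i. i \<in> I \<and> r i = u} else {i. i \<in> I \<and> r i = u})"
    by auto
  then show ?thesis
    using assms by simp
qed

lemma mg_det_hanging_paths:
  fixes p :: "'i \<Rightarrow> nat \<Rightarrow> 'a" and k :: "'i \<Rightarrow> nat"
  assumes "finite I" and fin: "finite U"
    and "\<forall>i\<in>I. p i 0 \<in> U \<and> p i ` {1..k i} \<inter> U = {} \<and> inj_on (p i) {1..k i}"
    and "disjoint_family_on (\<lambda>i. p i ` {1..k i}) I"
    and "\<forall>i\<in>I. hanging_path (U \<union> (\<Union>i\<in>I. p i ` {1..k i})) E (p i) (k i)"
    and "\<forall>i\<in>I. chain_det (path_marks mark (p i) (k i)) \<noteq> 0"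
  shows "mg_det (U \<union> (\<Union>i\<in>I. p i ` {1..k i})) mark E =
    (\<Prod>i\<in>I. chain_det (path_marks mark (p i) (k i))) *
    mg_det U (\<lambda>u. mark u - (\<Sum>i | i \<in> I \<and> p i 0 = u.
      chain_minor (path_marks mark (p i) (k i)) / chain_det (path_marks mark (p i) (k i)))) E"
  using assms(1,3-)
proof (induction I arbitrary: mark rule: finite_induct)
  case empty
  then show ?case
    by simp
next
  case (insert i0 I)
  let ?P = "\<lambda>i. p i ` {1..k i}"
  let ?K = "\<lambda>i. chain_det (path_marks mark (p i) (k i))"
  let ?M = "\<lambda>i. chain_minor (path_marks mark (p i) (k i))"
  define U' where "U' = U \<union> (\<Union>i\<in>I. ?P i)"
  define mark' where "mark' = mark(p i0 0 := mark (p i0 0) - ?M i0 / ?K i0)"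
  have root: "p i0 0 \<in> U'" and "finite U'"
    using insert.prems(1) insert.hyps(1) fin by (simp_all add: U'_def)
  have "?P i0 \<inter> (\<Union>i\<in>I. ?P i) = {}"
    using insert.prems(2) insert.hyps(2) by (simp add: disjoint_family_on_insert)
  then have "?P i0 \<inter> U' = {}"
    using insert.prems(1) by (auto simp: U'_def)
  moreover have vertices: "U \<union> (\<Union>i\<in>insert i0 I. ?P i) = U' \<union> ?P i0"
    by (auto simp: U'_def)
  ultimately have "mg_det (U' \<union> ?P i0) mark E = ?K i0 * mg_det U' mark' E"
    unfolding mark'_def using \<open>finite U'\<close> root insert.prems(1,3,4)
    by (intro mg_det_absorb_hanging_path) auto
  also have "mg_det U' mark' E = (\<Prod>i\<in>I. ?K i) *
      mg_det U (\<lambda>u. mark' u - (\<Sum>i | i \<in> I \<and> p i 0 = u. ?M i / ?K i)) E"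
  proof -
    have "p i0 0 \<notin> ?P i" if "i \<in> I" for i
    proof -
      have "?P i \<inter> U = {}"
        using insert.prems(1) that by simp
      then show ?thesis
        using insert.prems(1) by (metis disjoint_iff insertI1)
    qed
    then have "path_marks mark' (p i) (k i) = path_marks mark (p i) (k i)" if "i \<in> I" for i
      using that by (simp add: mark'_def path_marks_fun_upd)
    moreover have "hanging_path U' E (p i) (k i)" if "i \<in> I" for i
      using insert.prems(3) that by (auto simp: U'_def elim!: hanging_path_subset)
    moreover have "disjoint_family_on ?P I"
      using insert.prems(2) by (rule disjoint_family_on_mono[OF subset_insertI])
    ultimately show ?thesis
      using insert.IH[of mark'] insert.prems by (simp add: U'_def)
  qed
  also have "(\<lambda>u. mark' u - (\<Sum>i | i \<in> I \<and> p i 0 = u. ?M i / ?K i)) =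
      (\<lambda>u. mark u - (\<Sum>i | i \<in> insert i0 I \<and> p i 0 = u. ?M i / ?K i))"
    unfolding sum_filter_insert[OF insert.hyps] by (auto simp: fun_eq_iff mark'_def)
  finally show ?case
    unfolding vertices prod.insert[OF insert.hyps] by (simp only: mult.assoc)
qed

definition admissible_chain :: "int list \<Rightarrow> bool" where
  "admissible_chain c \<longleftrightarrow> c \<noteq> [] \<and> 1 \<le> c ! 0 \<and> (\<forall>l. 1 \<le> l \<and> l < length c \<longrightarrow> 2 \<le> c ! l)"

lemma p_of_eq: "c \<noteq> [] \<Longrightarrow> p_of c = of_int (c ! 0) * q_of c - chain_minor (map of_int (tl c))"
  by (cases c) (simp_all add: p_of_def q_of_def chain_det_Cons)

lemma p_of_q_of_ge_one:
  assumes "admissible_chain c"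
  shows "1 \<le> q_of c" "1 \<le> p_of c"
proof -
  have "2 \<le> tl c ! i" if "i < length (tl c)" for i
    using assms that spec[of _ "Suc i"] by (cases c) (auto simp: admissible_chain_def)
  then have "\<forall>x\<in>set (map real_of_int (tl c)). 2 \<le> x"
    by (auto simp: in_set_conv_nth)
  then have "0 \<le> chain_minor (map of_int (tl c))" "chain_minor (map of_int (tl c)) + 1 \<le> q_of c"
    unfolding q_of_def by (simp_all add: chain_det_ge_chain_minor)
  moreover have "q_of c \<le> of_int (c ! 0) * q_of c"
    using assms calculation by (simp add: admissible_chain_def)
  moreover have "p_of c = of_int (c ! 0) * q_of c - chain_minor (map of_int (tl c))"
    using assms by (simp add: p_of_eq admissible_chain_def)
  ultimately show "1 \<le> q_of c" "1 \<le> p_of c"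
    by linarith+
qed

lemma p_of_div_q_of:
  assumes "admissible_chain c"
  shows "p_of c / q_of c = of_int (c ! 0) - chain_minor (map of_int (tl c)) / q_of c"
  using assms p_of_q_of_ge_one(1)[OF assms] by (simp add: p_of_eq admissible_chain_def field_simps)

lemma mg_det_core_hanging_paths:
  fixes p :: "'v \<times> nat \<Rightarrow> nat \<Rightarrow> 'v + 'h"
  assumes fin: "finite V"
    and paths: "\<forall>(v, j)\<in>SIGMA v:V. {..<s v}.
      p (v, j) 0 = Inl v \<and> p (v, j) ` {1..k (v, j)} \<subseteq> range Inr \<and> inj_on (p (v, j)) {1..k (v, j)}"
    and "disjoint_family_on (\<lambda>i. p i ` {1..k i}) (SIGMA v:V. {..<s v})"
    and "\<forall>i\<in>SIGMA v:V. {..<s v}. hanging_path (Inl ` V \<union> (\<Union>i\<in>SIGMA v:V. {..<s v}. p i ` {1..k i})) E (p i) (k i)"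
    and "\<forall>i\<in>SIGMA v:V. {..<s v}. chain_det (path_marks mark (p i) (k i)) \<noteq> 0"
  shows "mg_det (Inl ` V \<union> (\<Union>i\<in>SIGMA v:V. {..<s v}. p i ` {1..k i})) mark E =
    (\<Prod>v\<in>V. \<Prod>j<s v. chain_det (path_marks mark (p (v, j)) (k (v, j)))) *
    mg_det V (\<lambda>v. mark (Inl v) - (\<Sum>j<s v.
      chain_minor (path_marks mark (p (v, j)) (k (v, j))) / chain_det (path_marks mark (p (v, j)) (k (v, j)))))
      (\<lambda>u v. E (Inl u) (Inl v))"
proof -
  let ?I = "SIGMA v:V. {..<s v}"
  let ?f = "\<lambda>i. chain_minor (path_marks mark (p i) (k i)) / chain_det (path_marks mark (p i) (k i))"
  have "\<forall>i\<in>?I. p i 0 \<in> Inl ` V \<and> p i ` {1..k i} \<inter> Inl ` V = {} \<and> inj_on (p i) {1..k i}"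
    using paths by fastforce
  then have "mg_det (Inl ` V \<union> (\<Union>i\<in>?I. p i ` {1..k i})) mark E =
      (\<Prod>i\<in>?I. chain_det (path_marks mark (p i) (k i))) *
      mg_det (Inl ` V) (\<lambda>u. mark u - (\<Sum>i | i \<in> ?I \<and> p i 0 = u. ?f i)) E"
    using assms by (intro mg_det_hanging_paths) auto
  also have "(\<Prod>i\<in>?I. chain_det (path_marks mark (p i) (k i))) =
      (\<Prod>v\<in>V. \<Prod>j<s v. chain_det (path_marks mark (p (v, j)) (k (v, j))))"
    using fin by (simp add: prod.Sigma)
  also have "mg_det (Inl ` V) (\<lambda>u. mark u - (\<Sum>i | i \<in> ?I \<and> p i 0 = u. ?f i)) E =
      mg_det V (\<lambda>v. mark (Inl v) - (\<Sum>i | i \<in> ?I \<and> p i 0 = Inl v. ?f i)) (\<lambda>u v. E (Inl u) (Inl v))"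
    using fin by (simp add: mg_det_image comp_def)
  also have "\<dots> = mg_det V (\<lambda>v. mark (Inl v) - (\<Sum>j<s v. ?f (v, j))) (\<lambda>u v. E (Inl u) (Inl v))"
  proof (rule mg_det_cong)
    fix v assume "v \<in> V"
    then have "{i. i \<in> ?I \<and> p i 0 = Inl v} = Pair v ` {..<s v}"
      using paths by force
    then show "mark (Inl v) - (\<Sum>i | i \<in> ?I \<and> p i 0 = Inl v. ?f i) = mark (Inl v) - (\<Sum>j<s v. ?f (v, j))"
      by (simp add: sum.reindex inj_on_def)
  qed
  finally show ?thesis .
qed

definition hairy_path :: "'v \<times> nat \<Rightarrow> nat \<Rightarrow> 'v + 'v \<times> nat \<times> nat" where
  "hairy_path i l = (if l = 0 then Inl (fst i) else Inr (fst i, snd i, l))"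

lemma hairy_V_eq:
  "hairy_V V C = Inl ` V \<union>
    (\<Union>i\<in>SIGMA v:V. {..<length (C v)}. hairy_path i ` {1..length (C (fst i) ! snd i) - 1})"
  unfolding hairy_V_def hairy_path_def by (auto simp: image_iff Bex_def)

lemma hanging_path_hairy:
  "hanging_path (hairy_V V C) (hairy_E w) (hairy_path i) (length (C (fst i) ! snd i) - 1)"
  unfolding hanging_path_def
proof (intro ballI conjI)
  let ?p = "hairy_path i" and ?k = "length (C (fst i) ! snd i) - 1"
  fix l z assume l: "l \<in> {1..?k}" and z: "z \<in> hairy_V V C - {?p l}"
  show "hairy_E w z (?p l) = hairy_E w (?p l) z"
    using l by (cases z) (auto simp: hairy_path_def)
  show "hairy_E w (?p l) z = of_bool (z = ?p (l - 1) \<or> (l < ?k \<and> z = ?p (Suc l)))"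
  proof (cases z)
    case (Inl u)
    then show ?thesis
      using l by (auto simp: hairy_path_def)
  next
    case (Inr x)
    then obtain u j l' where z_eq: "z = Inr (u, j, l')"
      by (cases x) auto
    with z have "1 \<le> l'" "l' < length (C u ! j)"
      by (auto simp: hairy_V_def)
    then show ?thesis
      using l z_eq by (auto simp: hairy_path_def)
  qed
qed

lemma path_marks_hairy:
  "path_marks (hairy_mark n C) (hairy_path i) (length (C (fst i) ! snd i) - 1) =
    map of_int (tl (C (fst i) ! snd i))"
proof -
  obtain v j where i: "i = (v, j)"
    by (cases i)
  have "path_marks (hairy_mark n C) (hairy_path i) (length (C v ! j) - 1) =
      map (\<lambda>l. of_int (C v ! j ! l)) [1..<Suc (length (C v ! j) - 1)]"
    unfolding path_marks_def by (intro map_cong refl) (simp del: upt_Suc add: hairy_path_def i)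
  also have "\<dots> = map of_int (tl (C v ! j))"
    by (cases "C v ! j = []") (simp_all del: upt_Suc add: map_nth_upt_1[symmetric])
  finally show ?thesis
    by (simp add: i)
qed

lemma mg_det_hairy:
  assumes fin: "finite V" and adm: "\<forall>v\<in>V. \<forall>j<length (C v). admissible_chain (C v ! j)"
  shows "mg_det (hairy_V V C) (hairy_mark n C) (hairy_E w) =
    (\<Prod>v\<in>V. \<Prod>j<length (C v). q_of (C v ! j)) *
    mg_det V (\<lambda>v. n v + (\<Sum>j<length (C v). p_of (C v ! j) / q_of (C v ! j))) w"
proof -
  let ?I = "SIGMA v:V. {..<length (C v)}"
  define k where "k i = length (C (fst i) ! snd i) - 1" for i
  note vertices = hairy_V_eq[of V C, folded k_def] and marks = path_marks_hairy[of n C, folded k_def]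
  have q_pos: "1 \<le> q_of (C v ! j)" if "v \<in> V" "j < length (C v)" for v j
    using adm that by (simp add: p_of_q_of_ge_one)
  have "\<forall>i\<in>?I. hanging_path (Inl ` V \<union> (\<Union>i\<in>?I. hairy_path i ` {1..k i})) (hairy_E w) (hairy_path i) (k i)"
    using hanging_path_hairy[of V C w, folded k_def] unfolding vertices by blast
  moreover have "\<forall>(v, j)\<in>?I. hairy_path (v, j) 0 = Inl v \<and> hairy_path (v, j) ` {1..k (v, j)} \<subseteq> range Inr \<and>
      inj_on (hairy_path (v, j)) {1..k (v, j)}"
    by (auto simp: hairy_path_def inj_on_def)
  moreover have "disjoint_family_on (\<lambda>i. hairy_path i ` {1..k i}) ?I"
    by (auto simp: disjoint_family_on_def hairy_path_def)
  moreover have "\<forall>i\<in>?I. chain_det (path_marks (hairy_mark n C) (hairy_path i) (k i)) \<noteq> 0"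
    unfolding marks using q_pos by (force simp: q_of_def)
  ultimately have "mg_det (hairy_V V C) (hairy_mark n C) (hairy_E w) =
      (\<Prod>v\<in>V. \<Prod>j<length (C v). chain_det (path_marks (hairy_mark n C) (hairy_path (v, j)) (k (v, j)))) *
      mg_det V (\<lambda>v. hairy_mark n C (Inl v) - (\<Sum>j<length (C v).
        chain_minor (path_marks (hairy_mark n C) (hairy_path (v, j)) (k (v, j))) /
        chain_det (path_marks (hairy_mark n C) (hairy_path (v, j)) (k (v, j))))) (\<lambda>u v. hairy_E w (Inl u) (Inl v))"
    unfolding vertices by (intro mg_det_core_hanging_paths[OF fin])
  also have "\<dots> = (\<Prod>v\<in>V. \<Prod>j<length (C v). q_of (C v ! j)) *
      mg_det V (\<lambda>v. hairy_mark n C (Inl v) - (\<Sum>j<length (C v).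
        chain_minor (map of_int (tl (C v ! j))) / q_of (C v ! j))) w"
    by (simp add: marks q_of_def)
  also have "\<dots> = (\<Prod>v\<in>V. \<Prod>j<length (C v). q_of (C v ! j)) *
      mg_det V (\<lambda>v. n v + (\<Sum>j<length (C v). p_of (C v ! j) / q_of (C v ! j))) w"
  proof (intro arg_cong[where f = "\<lambda>x. _ * x"] mg_det_cong)
    fix v assume "v \<in> V"
    then show "hairy_mark n C (Inl v) - (\<Sum>j<length (C v). chain_minor (map of_int (tl (C v ! j))) / q_of (C v ! j)) =
        n v + (\<Sum>j<length (C v). p_of (C v ! j) / q_of (C v ! j))"
      using adm by (simp add: p_of_div_q_of sum_subtractf)
  qed
  finally show ?thesis .
qed

definition tilde_path :: "'v \<times> nat \<Rightarrow> nat \<Rightarrow> 'v + 'v \<times> nat" where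
  "tilde_path i l = (if l = 0 then Inl (fst i) else Inr i)"

lemma tilde_V_eq: "tilde_V V C = Inl ` V \<union> (\<Union>i\<in>SIGMA v:V. {..<length (C v)}. tilde_path i ` {1..1})"
  unfolding tilde_V_def tilde_path_def by auto

lemma hanging_path_tilde: "hanging_path (tilde_V V C) (tilde_E w) (tilde_path i) 1"
  unfolding hanging_path_def tilde_V_def by (cases i) (auto simp: tilde_path_def)

lemma path_marks_tilde:
  "path_marks (tilde_mark n C) (tilde_path i) 1 = [- q_of (C (fst i) ! snd i) / p_of (C (fst i) ! snd i)]"
  by (cases i) (simp add: path_marks_def tilde_path_def)

lemma mg_det_tilde:
  assumes fin: "finite V" and adm: "\<forall>v\<in>V. \<forall>j<length (C v). admissible_chain (C v ! j)"
  shows "mg_det (tilde_V V C) (tilde_mark n C) (tilde_E w) =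
    (\<Prod>v\<in>V. \<Prod>j<length (C v). - q_of (C v ! j) / p_of (C v ! j)) *
    mg_det V (\<lambda>v. n v + (\<Sum>j<length (C v). p_of (C v ! j) / q_of (C v ! j))) w"
proof -
  let ?I = "SIGMA v:V. {..<length (C v)}"
  have pq_pos: "1 \<le> q_of (C v ! j)" "1 \<le> p_of (C v ! j)" if "v \<in> V" "j < length (C v)" for v j
    using adm that by (simp_all add: p_of_q_of_ge_one)
  have "\<forall>i\<in>?I. hanging_path (Inl ` V \<union> (\<Union>i\<in>?I. tilde_path i ` {1..1})) (tilde_E w) (tilde_path i) 1"
    using hanging_path_tilde[of V C w] unfolding tilde_V_eq by blast
  moreover have "\<forall>(v, j)\<in>?I. tilde_path (v, j) 0 = Inl v \<and> tilde_path (v, j) ` {1..1} \<subseteq> range Inr \<and>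
      inj_on (tilde_path (v, j)) {1..1}"
    by (auto simp: tilde_path_def)
  moreover have "disjoint_family_on (\<lambda>i. tilde_path i ` {1..1}) ?I"
    by (auto simp: disjoint_family_on_def tilde_path_def)
  moreover have "\<forall>i\<in>?I. chain_det (path_marks (tilde_mark n C) (tilde_path i) 1) \<noteq> 0"
    unfolding path_marks_tilde using pq_pos by force
  ultimately have "mg_det (tilde_V V C) (tilde_mark n C) (tilde_E w) =
      (\<Prod>v\<in>V. \<Prod>j<length (C v). chain_det (path_marks (tilde_mark n C) (tilde_path (v, j)) 1)) *
      mg_det V (\<lambda>v. tilde_mark n C (Inl v) - (\<Sum>j<length (C v).
        chain_minor (path_marks (tilde_mark n C) (tilde_path (v, j)) 1) /
        chain_det (path_marks (tilde_mark n C) (tilde_path (v, j)) 1))) (\<lambda>u v. tilde_E w (Inl u) (Inl v))"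
    unfolding tilde_V_eq by (intro mg_det_core_hanging_paths[OF fin])
  also have "\<dots> = (\<Prod>v\<in>V. \<Prod>j<length (C v). - q_of (C v ! j) / p_of (C v ! j)) *
      mg_det V (\<lambda>v. n v + (\<Sum>j<length (C v). p_of (C v ! j) / q_of (C v ! j))) w"
    unfolding path_marks_tilde by (simp add: sum_negf)
  finally show ?thesis .
qed

theorem theorem2p7:
  fixes V :: "'v set" and n :: "'v \<Rightarrow> real" and w :: "'v \<Rightarrow> 'v \<Rightarrow> nat"
    and C :: "'v \<Rightarrow> int list list"
  assumes finV: "finite V"
    and sym: "\<And>u v. w u v = w v u"
    and noloop: "\<And>v. w v v = 0"
    and chains: "\<And>v j. v \<in> V \<Longrightarrow> j < length (C v) \<Longrightarrow>
         C v ! j \<noteq> [] \<and> C v ! j ! 0 \<ge> 1 \<and>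
         (\<forall>l. 1 \<le> l \<and> l < length (C v ! j) \<longrightarrow> C v ! j ! l \<ge> 2)"
  shows "(mg_det (hairy_V V C) (hairy_mark n C) (hairy_E w) =
           mg_det V (\<lambda>v. n v + (\<Sum>j<length (C v). p_of (C v ! j) / q_of (C v ! j))) w
           * (\<Prod>v\<in>V. \<Prod>j<length (C v). q_of (C v ! j))) \<and>
         (mg_det (hairy_V V C) (hairy_mark n C) (hairy_E w) =
           mg_det (tilde_V V C) (tilde_mark n C) (tilde_E w)
           * (\<Prod>v\<in>V. \<Prod>j<length (C v). - p_of (C v ! j)))"
proof -
  have adm: "\<forall>v\<in>V. \<forall>j<length (C v). admissible_chain (C v ! j)"
    using chains by (simp add: admissible_chain_def)
  have "(\<Prod>v\<in>V. \<Prod>j<length (C v). - q_of (C v ! j) / p_of (C v ! j)) *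
      (\<Prod>v\<in>V. \<Prod>j<length (C v). - p_of (C v ! j)) = (\<Prod>v\<in>V. \<Prod>j<length (C v). q_of (C v ! j))"
    unfolding prod.distrib[symmetric]
  proof (intro prod.cong refl)
    fix v j assume "v \<in> V" "j \<in> {..<length (C v)}"
    then have "p_of (C v ! j) \<noteq> 0"
      using adm p_of_q_of_ge_one(2) by force
    then show "- q_of (C v ! j) / p_of (C v ! j) * - p_of (C v ! j) = q_of (C v ! j)"
      by simp
  qed
  then show ?thesis
    using mg_det_hairy[OF finV adm] mg_det_tilde[OF finV adm] by (simp add: ac_simps)
qed

end
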